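(* Let $a,d,r,h,n$ be positive integers with $r\geq2$, $\gcd(a,d)=\gcd(a,r)=1$ and $d>hn(r-1)$. Put $a_0=a$ and $a_{k+1}=ha+r^kd$ for $0\leq k\leq n$, and suppose $\{a_0,\dots,a_{n+1}\}$ is a minimal system of generators of the numerical semigroup $\mathfrak{S}_{n+2}=\langle a_0,\dots,a_{n+1}\rangle$. For $1\leq i\leq a-1$ let $i=\sum_{k=0}^{n}a_{ki}r^k$ be the $r$-adic representation of $i$ up to order $n$ and $\ell_i=\sum_{k=0}^{n}a_{ki}$. Then $$\mathrm{Ap}(\mathfrak{S}_{n+2},a)=\{0\}\cup\{\ell_iha+id\mid 1\leq i\leq a-1\}.$$
   Context: The $r$-adic representation of $i$ up to order $n$ is the unique expression $i=\sum_{k=0}^{n}\alpha_kr^k$ with nonnegative integers $\alpha_k$, $0\leq\alpha_k\leq r-1$ for $k\leq n-1$ and $\alpha_n$ unrestricted. $\mathrm{Ap}(\Gamma,a)=\{s\in\Gamma\mid s-a\notin\Gamma\}$. *)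

theory Defs
  imports Main
begin

definition gen_semigroup :: "nat set \<Rightarrow> nat set" where
  "gen_semigroup A = {x. \<exists>c :: nat \<Rightarrow> nat. x = (\<Sum>g\<in>A. c g * g)}"

definition minimal_generators :: "nat set \<Rightarrow> bool" where
  "minimal_generators A \<longleftrightarrow> (\<forall>g\<in>A. g \<notin> gen_semigroup (A - {g}))"

definition apery :: "nat set \<Rightarrow> nat \<Rightarrow> nat set" where
  "apery S a = {s \<in> S. int s - int a \<notin> int ` S}"

text \<open>k-th digit of the r-adic representation of i up to order n:
  digits 0..n-1 in [0,r-1], the n-th digit unrestricted.\<close>
definition radic_digit :: "nat \<Rightarrow> nat \<Rightarrow> nat \<Rightarrow> nat \<Rightarrow> nat" where
  "radic_digit r n i k = (if k < n then (i div r ^ k) mod r else i div r ^ n)"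

definition radic_len :: "nat \<Rightarrow> nat \<Rightarrow> nat \<Rightarrow> nat" where
  "radic_len r n i = (\<Sum>k\<le>n. radic_digit r n i k)"

end

theory Submission
  imports Defs "HOL-Number_Theory.Cong"
begin

text \<open>Every element of the semigroup has the form \<open>(c\<^sub>0 + h \<Sum>c\<^sub>k) a + (\<Sum>c\<^sub>k r\<^sup>k) d\<close>.
  Write \<open>\<Sum>c\<^sub>k r\<^sup>k = i + j a\<close> with \<open>i < a\<close>. If \<open>j = 0\<close>, the \<open>r\<close>-adic digit sum \<open>\<ell>\<^sub>i\<close>
  is the least \<open>\<Sum>c\<^sub>k\<close> over all representations of \<open>i\<close>; if \<open>j \<ge> 1\<close>, then
  \<open>\<ell>\<^sub>i \<le> n(r-1) + \<Sum>c\<^sub>k\<close> and \<open>jd > hn(r-1)\<close> pays for the excess. Either way the element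
  is \<open>E a + i d\<close> with \<open>E \<ge> h \<ell>\<^sub>i\<close>, while \<open>w\<^sub>i = h \<ell>\<^sub>i a + i d\<close> itself lies in the semigroup.
  As \<open>gcd(a,d) = 1\<close>, the \<open>w\<^sub>i\<close> lie in distinct residue classes modulo \<open>a\<close>, so they are
  exactly the least elements of these classes, i.e. the Apery set.\<close>

lemma radic_len_order_0: "radic_len r 0 m = m"
  by (simp add: radic_len_def radic_digit_def)

lemma radic_len_zero: "radic_len r n 0 = 0"
  unfolding radic_len_def by (intro sum.neutral) (simp add: radic_digit_def)

lemma radic_digit_Suc_0: "radic_digit r (Suc n) m 0 = m mod r"
  by (simp add: radic_digit_def)

lemma radic_digit_Suc_Suc: "radic_digit r (Suc n) m (Suc k) = radic_digit r n (m div r) k"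
  by (simp add: radic_digit_def div_mult2_eq mult.commute)

lemma radic_len_Suc: "radic_len r (Suc n) m = m mod r + radic_len r n (m div r)"
  unfolding radic_len_def
  by (simp only: sum.atMost_Suc_shift radic_digit_Suc_0 radic_digit_Suc_Suc)

lemma radic_expansion: "(\<Sum>k\<le>n. radic_digit r n m k * r ^ k) = m"
proof (induction n arbitrary: m)
  case 0
  then show ?case by (simp add: radic_digit_def)
next
  case (Suc n)
  have "(\<Sum>k\<le>Suc n. radic_digit r (Suc n) m k * r ^ k)
      = m mod r + r * (\<Sum>k\<le>n. radic_digit r n (m div r) k * r ^ k)"
    by (simp only: sum.atMost_Suc_shift radic_digit_Suc_0 radic_digit_Suc_Suc sum_distrib_left)
       (simp add: algebra_simps)
  also have "\<dots> = m" using Suc by simp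
  finally show ?case .
qed

text \<open>Among all representations \<open>m = \<Sum>c\<^sub>k r\<^sup>k\<close>, the \<open>r\<close>-adic one has the least
  coefficient sum: carrying \<open>r\<close> units of \<open>r\<^sup>k\<close> into one unit of \<open>r\<^sup>k\<^sup>+\<^sup>1\<close> lowers it.\<close>

lemma radic_len_le_coeff_sum:
  assumes "r \<ge> 1"
  shows "radic_len r n (\<Sum>k\<le>n. c k * r ^ k) \<le> (\<Sum>k\<le>n. c k)"
  using assms
proof (induction n arbitrary: c)
  case 0
  then show ?case by (simp add: radic_len_order_0)
next
  case (Suc n)
  define c' where "c' k = (if k = 0 then c 1 + c 0 div r else c (Suc k))" for k
  have expand: "(\<Sum>k\<le>Suc n. c k * r ^ k) = c 0 + r * (\<Sum>k\<le>n. c (Suc k) * r ^ k)"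
    by (simp only: sum.atMost_Suc_shift sum_distrib_left) (simp add: algebra_simps)
  have div_r: "(c 0 + r * (\<Sum>k\<le>n. c (Suc k) * r ^ k)) div r
      = (\<Sum>k\<le>n. c' k * r ^ k)"
    using Suc.prems by (simp add: c'_def sum.atMost_shift)
  have "radic_len r n (\<Sum>k\<le>n. c' k * r ^ k) \<le> (\<Sum>k\<le>n. c' k)"
    using Suc by blast
  moreover have "(\<Sum>k\<le>n. c' k) = c 0 div r + (\<Sum>k\<le>n. c (Suc k))"
    by (simp add: c'_def sum.atMost_shift)
  moreover have "c 0 mod r + c 0 div r \<le> c 0"
  proof -
    have "c 0 div r \<le> r * (c 0 div r)" using Suc.prems by simp
    then show ?thesis using mod_mult_div_eq[of "c 0" r] by linarith
  qed
  moreover have "(\<Sum>k\<le>Suc n. c k) = c 0 + (\<Sum>k\<le>n. c (Suc k))"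
    by (simp only: sum.atMost_Suc_shift)
  ultimately show ?case
    unfolding expand radic_len_Suc div_r by simp
qed

lemma radic_len_le:
  assumes "r \<ge> 1"
  shows "radic_len r n m \<le> n * (r - 1) + m div r ^ n"
proof -
  have "radic_len r n m = (\<Sum>k<n. radic_digit r n m k) + m div r ^ n"
    by (simp add: radic_len_def lessThan_Suc_atMost[symmetric] radic_digit_def)
  also have "(\<Sum>k<n. radic_digit r n m k) \<le> (\<Sum>k<n. r - 1)"
    using assms by (intro sum_mono) (simp add: radic_digit_def less_Suc_eq_le[symmetric])
  finally show ?thesis by simp
qed

lemma mem_gen_semigroup_image:
  assumes "inj_on f A"
  shows "x \<in> gen_semigroup (f ` A) \<longleftrightarrow> (\<exists>c. x = (\<Sum>k\<in>A. c k * f k))"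
proof
  assume "x \<in> gen_semigroup (f ` A)"
  then obtain C where "x = (\<Sum>g\<in>f ` A. C g * g)"
    by (auto simp: gen_semigroup_def)
  then have "x = (\<Sum>k\<in>A. (C \<circ> f) k * f k)"
    using assms by (simp add: sum.reindex)
  then show "\<exists>c. x = (\<Sum>k\<in>A. c k * f k)" by blast
next
  assume "\<exists>c. x = (\<Sum>k\<in>A. c k * f k)"
  then obtain c where x: "x = (\<Sum>k\<in>A. c k * f k)" by blast
  have "x = (\<Sum>g\<in>f ` A. c (the_inv_into A f g) * g)"
    using assms unfolding x by (simp add: sum.reindex the_inv_into_f_f)
  then show "x \<in> gen_semigroup (f ` A)"
    unfolding gen_semigroup_def by (intro CollectI exI)
qed

lemma mem_gen_semigroup_insert:
  assumes "finite A" "a \<notin> A"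
  shows "x \<in> gen_semigroup (insert a A) \<longleftrightarrow> (\<exists>c0 y. y \<in> gen_semigroup A \<and> x = c0 * a + y)"
proof
  assume "x \<in> gen_semigroup (insert a A)"
  then obtain c where "x = c a * a + (\<Sum>g\<in>A. c g * g)"
    using assms by (auto simp: gen_semigroup_def)
  then show "\<exists>c0 y. y \<in> gen_semigroup A \<and> x = c0 * a + y"
    unfolding gen_semigroup_def by blast
next
  assume "\<exists>c0 y. y \<in> gen_semigroup A \<and> x = c0 * a + y"
  then obtain c0 c where x: "x = c0 * a + (\<Sum>g\<in>A. c g * g)"
    unfolding gen_semigroup_def by blast
  have "(\<Sum>g\<in>A. (c(a := c0)) g * g) = (\<Sum>g\<in>A. c g * g)"
    using assms(2) by (intro sum.cong) auto
  then have "x = (\<Sum>g\<in>insert a A. (c(a := c0)) g * g)"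
    using assms x by simp
  then show "x \<in> gen_semigroup (insert a A)"
    unfolding gen_semigroup_def by blast
qed

lemma apery_iff:
  "s \<in> apery S a \<longleftrightarrow> s \<in> S \<and> \<not> (a \<le> s \<and> s - a \<in> S)"
proof -
  have "int s - int a \<in> int ` S \<longleftrightarrow> a \<le> s \<and> s - a \<in> S"
  proof
    assume "int s - int a \<in> int ` S"
    then obtain y where "y \<in> S" "int s - int a = int y" by auto
    then have "s = y + a" by linarith
    with \<open>y \<in> S\<close> show "a \<le> s \<and> s - a \<in> S" by simp
  next
    assume "a \<le> s \<and> s - a \<in> S"
    then show "int s - int a \<in> int ` S" by (force simp: of_nat_diff)
  qed
  then show ?thesis unfolding apery_def by auto
qed

lemma coprime_mult_add_cancel:
  fixes a d E E' i i' :: nat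
  assumes "coprime a d" "i < a" "i' < a" "E * a + i * d = E' * a + i' * d"
  shows "i = i' \<and> E = E'"
proof -
  have "[i * d = i' * d] (mod a)"
    using arg_cong[OF assms(4), of "\<lambda>x. x mod a"] by (simp add: cong_def)
  then have "[i = i'] (mod a)"
    using assms(1) by (simp add: cong_mult_rcancel_nat coprime_commute)
  then have "i = i'"
    using assms(2,3) by (rule cong_less_modulus_unique_nat)
  with assms(2,4) show ?thesis by simp
qed

locale arith_seq_semigroup =
  fixes a d r h n :: nat
  assumes a_pos: "a > 0" and h_pos: "h > 0" and r_ge_2: "r \<ge> 2"
    and d_large: "d > h * n * (r - 1)"
begin

abbreviation S :: "nat set" where
  "S \<equiv> gen_semigroup ({a} \<union> {h * a + r ^ k * d | k. k \<le> n})"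

lemma mem_S_iff:
  "x \<in> S \<longleftrightarrow> (\<exists>c0 c. x = (c0 + h * (\<Sum>k\<le>n. c k)) * a + (\<Sum>k\<le>n. c k * r ^ k) * d)"
proof -
  define f where "f k = h * a + r ^ k * d" for k
  have d_pos: "d > 0" using d_large by simp
  have gens: "{a} \<union> {h * a + r ^ k * d | k. k \<le> n} = insert a (f ` {..n})"
    by (auto simp: f_def)
  have inj: "inj_on f {..n}"
    using r_ge_2 d_pos by (intro inj_onI) (simp add: f_def power_inject_exp)
  have "a < f k" for k
  proof -
    have "a \<le> h * a" using h_pos by simp
    moreover have "r ^ k * d > 0" using r_ge_2 d_pos by simp
    ultimately show ?thesis unfolding f_def by linarith
  qed
  then have "a \<notin> f ` {..n}"
    by (auto simp: less_irrefl)
  have sum_f: "(\<Sum>k\<le>n. c k * f k) = h * (\<Sum>k\<le>n. c k) * a + (\<Sum>k\<le>n. c k * r ^ k) * d" for c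
    by (simp add: f_def algebra_simps sum.distrib sum_distrib_left sum_distrib_right)
  have "x \<in> S \<longleftrightarrow> (\<exists>c0 y. y \<in> gen_semigroup (f ` {..n}) \<and> x = c0 * a + y)"
    unfolding gens using \<open>a \<notin> f ` {..n}\<close> by (simp add: mem_gen_semigroup_insert)
  also have "\<dots> \<longleftrightarrow> (\<exists>c0 c. x = c0 * a + (\<Sum>k\<le>n. c k * f k))"
    using mem_gen_semigroup_image[OF inj] by auto
  finally show ?thesis
    by (simp add: sum_f add_mult_distrib add.assoc)
qed

lemma radic_point_mem_S: "(e + h * radic_len r n i) * a + i * d \<in> S"
  unfolding mem_S_iff
  by (rule exI[of _ e], rule exI[of _ "radic_digit r n i"]) (simp add: radic_len_def radic_expansion)

lemma h_radic_len_le: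
  assumes "(\<Sum>k\<le>n. c k * r ^ k) = i + j * a"
  shows "h * radic_len r n i \<le> h * (\<Sum>k\<le>n. c k) + j * d"
proof (cases "j = 0")
  case True
  then show ?thesis
    using radic_len_le_coeff_sum[of r n c] r_ge_2 assms by simp
next
  case False
  let ?L = "\<Sum>k\<le>n. c k"
  have "(\<Sum>k\<le>n. c k * r ^ k) \<le> ?L * r ^ n"
    unfolding sum_distrib_right using r_ge_2 by (intro sum_mono) (simp add: power_increasing)
  then have "i \<le> ?L * r ^ n"
    using assms by linarith
  then have "i div r ^ n \<le> ?L"
    using div_le_mono[of i "?L * r ^ n" "r ^ n"] r_ge_2 by simp
  then have "radic_len r n i \<le> n * (r - 1) + ?L"
    using radic_len_le[of r n i] r_ge_2 by linarith
  then have "h * radic_len r n i \<le> h * n * (r - 1) + h * ?L"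
    by (metis add_mult_distrib2 mult.assoc mult_le_mono2)
  moreover have "d \<le> j * d" using False by simp
  ultimately show ?thesis using d_large by linarith
qed

lemma mem_S_above_radic_point:
  assumes "x \<in> S"
  obtains E i where "i < a" "x = E * a + i * d" "h * radic_len r n i \<le> E"
proof -
  obtain c0 c where x: "x = (c0 + h * (\<Sum>k\<le>n. c k)) * a + (\<Sum>k\<le>n. c k * r ^ k) * d"
    using assms mem_S_iff by blast
  define i where "i = (\<Sum>k\<le>n. c k * r ^ k) mod a"
  define j where "j = (\<Sum>k\<le>n. c k * r ^ k) div a"
  have M: "(\<Sum>k\<le>n. c k * r ^ k) = i + j * a"
    unfolding i_def j_def by simp
  show thesis
  proof
    show "i < a" unfolding i_def using a_pos by simp
    show "x = (c0 + h * (\<Sum>k\<le>n. c k) + j * d) * a + i * d"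
      unfolding x M by (simp add: algebra_simps)
    show "h * radic_len r n i \<le> c0 + h * (\<Sum>k\<le>n. c k) + j * d"
      using h_radic_len_le[OF M] by linarith
  qed
qed

lemma apery_S:
  assumes "coprime a d"
  shows "apery S a = {0} \<union> {radic_len r n i * h * a + i * d | i. 1 \<le> i \<and> i \<le> a - 1}"
    (is "_ = ?W")
proof (intro equalityI subsetI)
  fix s assume "s \<in> apery S a"
  then have "s \<in> S" and not_shift: "\<not> (a \<le> s \<and> s - a \<in> S)"
    by (auto simp: apery_iff)
  obtain E i where i: "i < a" and s: "s = E * a + i * d" and E: "h * radic_len r n i \<le> E"
    using \<open>s \<in> S\<close> by (rule mem_S_above_radic_point)
  have "E = h * radic_len r n i"
  proof (rule ccontr)
    assume "E \<noteq> h * radic_len r n i"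
    then have "s - a = (E - 1 - h * radic_len r n i + h * radic_len r n i) * a + i * d"
      and "a \<le> s"
      using E unfolding s by (auto simp: algebra_simps diff_mult_distrib intro: trans_le_add1)
    then show False
      using not_shift radic_point_mem_S by simp
  qed
  with s have "s = radic_len r n i * h * a + i * d"
    by simp
  with i show "s \<in> ?W"
    by (cases "i = 0") (auto simp: radic_len_zero)
next
  fix s assume "s \<in> ?W"
  then obtain i where i: "i < a" and "s = radic_len r n i * h * a + i * d"
    using a_pos by (auto simp: radic_len_zero) (metis One_nat_def Suc_pred le_imp_less_Suc)
  then have s: "s = (0 + h * radic_len r n i) * a + i * d"
    by simp
  have "\<not> (a \<le> s \<and> s - a \<in> S)"
  proof
    assume shift: "a \<le> s \<and> s - a \<in> S"
    then obtain E' i' where "i' < a" and shifted: "s - a = E' * a + i' * d"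
      and E': "h * radic_len r n i' \<le> E'"
      by (blast elim: mem_S_above_radic_point)
    have "(E' + 1) * a + i' * d = a + (s - a)"
      using shifted by simp
    also have "\<dots> = (h * radic_len r n i) * a + i * d"
      using shift s by simp
    finally have "(E' + 1) * a + i' * d = (h * radic_len r n i) * a + i * d" .
    then have "i' = i \<and> E' + 1 = h * radic_len r n i"
      by (rule coprime_mult_add_cancel[OF assms \<open>i' < a\<close> i])
    with E' show False by simp
  qed
  moreover have "s \<in> S"
    unfolding s by (rule radic_point_mem_S)
  ultimately show "s \<in> apery S a"
    by (simp add: apery_iff)
qed

end

theorem theorem7p3:
  fixes a d r h n :: nat
  assumes "a > 0" "d > 0" "r > 0" "h > 0" "n > 0"
    and "r \<ge> 2"
    and "gcd a d = 1" "gcd a r = 1"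
    and "d > h * n * (r - 1)"
    and "minimal_generators ({a} \<union> {h * a + r ^ k * d | k. k \<le> n})"
  shows "apery (gen_semigroup ({a} \<union> {h * a + r ^ k * d | k. k \<le> n})) a
         = {0} \<union> {radic_len r n i * h * a + i * d | i. 1 \<le> i \<and> i \<le> a - 1}"
proof -
  interpret arith_seq_semigroup a d r h n
    using assms by unfold_locales auto
  show ?thesis
    using assms(7) by (intro apery_S) (simp add: coprime_iff_gcd_eq_1)
qed

end
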